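(* For every $\varepsilon>0$ and positive integer $m$ there is $p_0(\varepsilon,m)$ such that for every prime $p\ge p_0(\varepsilon,m)$ there exists a Euclidean sub-$p$-toral set $B=\{b_1,\dots,b_m\}$ (in some Euclidean space) with $\bigl|\,|b_i-b_j|-|i-j|\,\bigr|<\varepsilon$ for all $i,j$.
   Context: A $p$-torus is a group isomorphic to $(\mathbb{Z}_p)^\alpha$ for some $\alpha\ge1$. A set $X\subset\mathbb{R}^k$ is Euclidean sub-$p$-toral if there exist $n\ge k$, a $p$-torus $G$ and an action of $G$ on $\mathbb{R}^n$ by isometries such that $X$ (viewed in $\mathbb{R}^n$ via the standard inclusion $\mathbb{R}^k\subset\mathbb{R}^n$) is contained in a single $G$-orbit. *)

theory Defs
  imports Complex_Main "HOL-Computational_Algebra.Primes"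
begin

text \<open>Euclidean space R^n, modelled as real sequences vanishing from index n on.
  The standard inclusion R^k \<subseteq> R^n (k \<le> n) is then literally set inclusion.\<close>
definition euclid :: "nat \<Rightarrow> (nat \<Rightarrow> real) set" where
  "euclid n = {x. \<forall>i\<ge>n. x i = 0}"

definition edist :: "nat \<Rightarrow> (nat \<Rightarrow> real) \<Rightarrow> (nat \<Rightarrow> real) \<Rightarrow> real" where
  "edist n x y = sqrt (\<Sum>i<n. (x i - y i)^2)"

definition ptorus :: "nat \<Rightarrow> nat \<Rightarrow> (nat \<Rightarrow> nat) set" where
  "ptorus p \<alpha> = {g. (\<forall>i<\<alpha>. g i < p) \<and> (\<forall>i\<ge>\<alpha>. g i = 0)}"

definition tadd :: "nat \<Rightarrow> (nat \<Rightarrow> nat) \<Rightarrow> (nat \<Rightarrow> nat) \<Rightarrow> (nat \<Rightarrow> nat)" where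
  "tadd p g h = (\<lambda>i. (g i + h i) mod p)"

definition isometric_action ::
  "nat \<Rightarrow> nat \<Rightarrow> nat \<Rightarrow> ((nat \<Rightarrow> nat) \<Rightarrow> (nat \<Rightarrow> real) \<Rightarrow> (nat \<Rightarrow> real)) \<Rightarrow> bool" where
  "isometric_action p \<alpha> n act \<longleftrightarrow>
     (\<forall>g\<in>ptorus p \<alpha>. act g ` euclid n = euclid n \<and>
        (\<forall>x\<in>euclid n. \<forall>y\<in>euclid n. edist n (act g x) (act g y) = edist n x y)) \<and>
     (\<forall>x\<in>euclid n. act (\<lambda>_. 0) x = x) \<and>
     (\<forall>g\<in>ptorus p \<alpha>. \<forall>h\<in>ptorus p \<alpha>. \<forall>x\<in>euclid n.
        act (tadd p g h) x = act g (act h x))"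

definition sub_ptoral :: "nat \<Rightarrow> nat \<Rightarrow> (nat \<Rightarrow> real) set \<Rightarrow> bool" where
  "sub_ptoral p k X \<longleftrightarrow> X \<subseteq> euclid k \<and>
     (\<exists>n\<ge>k. \<exists>\<alpha>\<ge>1. \<exists>act. isometric_action p \<alpha> n act \<and>
        (\<exists>x0\<in>euclid n. X \<subseteq> (\<lambda>g. act g x0) ` ptorus p \<alpha>))"

end

theory Submission
  imports Defs
begin

text \<open>The cyclic group \<open>\<int>\<^sub>p\<close> acts on the plane by rotations through multiples of \<open>2\<pi>/p\<close>, and
  the orbit of a point at radius \<open>1 / (2 sin (\<pi>/p))\<close> is a regular \<open>p\<close>-gon of side length 1.
  Its vertices \<open>b\<^sub>i\<close>, \<open>b\<^sub>j\<close> are at distance \<open>sin (D\<pi>/p) / sin (\<pi>/p)\<close> with \<open>D = |i - j|\<close>, and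
  since \<open>sin x = x + O(x\<^sup>3)\<close> this differs from \<open>D\<close> by \<open>O(D\<^sup>3/p\<^sup>2)\<close>.  So the first \<open>m\<close>
  vertices form the required set once \<open>p\<close> is large compared to \<open>m\<^sup>3/\<epsilon>\<close>.\<close>

definition rot :: "real \<Rightarrow> (nat \<Rightarrow> real) \<Rightarrow> (nat \<Rightarrow> real)" where
  "rot t x = (\<lambda>i. if i = 0 then cos t * x 0 - sin t * x 1
               else if i = 1 then sin t * x 0 + cos t * x 1 else x i)"

lemma rot_add: "rot (s + t) x = rot s (rot t x)"
  by (rule ext) (auto simp: rot_def cos_add sin_add algebra_simps)

lemma rot_0: "rot 0 x = x"
  by (rule ext) (auto simp: rot_def)

lemma rot_in_euclid_2: "x \<in> euclid 2 \<Longrightarrow> rot t x \<in> euclid 2"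
  by (auto simp: rot_def euclid_def)

lemma image_rot_euclid_2: "rot t ` euclid 2 = euclid 2"
proof
  show "rot t ` euclid 2 \<subseteq> euclid 2"
    using rot_in_euclid_2 by auto
  show "euclid 2 \<subseteq> rot t ` euclid 2"
  proof
    fix x assume "x \<in> euclid 2"
    moreover have "x = rot t (rot (- t) x)"
      by (metis rot_add rot_0 add.right_inverse)
    ultimately show "x \<in> rot t ` euclid 2"
      using rot_in_euclid_2 by blast
  qed
qed

lemma rot_add_2pi_multiple: "rot (t + 2 * pi * real q) = rot t"
proof -
  have "cos (2 * pi * real q) = 1" "sin (2 * pi * real q) = 0"
    using cos_2npi[of q] sin_2npi[of q] by (simp_all add: mult.commute mult.left_commute)
  then have "rot (2 * pi * real q) = id"
    by (intro ext) (simp add: rot_def)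
  then show ?thesis
    by (metis rot_add id_apply ext)
qed

lemma edist_2: "edist 2 x y = sqrt ((x 0 - y 0)^2 + (x 1 - y 1)^2)"
  by (simp add: edist_def numeral_2_eq_2 lessThan_Suc)

lemma edist_rot: "edist 2 (rot t x) (rot t y) = edist 2 x y"
proof -
  have "(cos t * x 0 - sin t * x 1 - (cos t * y 0 - sin t * y 1))^2 +
        (sin t * x 0 + cos t * x 1 - (sin t * y 0 + cos t * y 1))^2
      = (sin t ^ 2 + cos t ^ 2) * ((x 0 - y 0)^2 + (x 1 - y 1)^2)"
    by algebra
  then show ?thesis
    by (simp add: edist_2 rot_def)
qed

lemma edist_rot_rot_axis:
  "edist 2 (rot a (\<lambda>j. if j = 0 then R else 0)) (rot c (\<lambda>j. if j = 0 then R else 0))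
     = 2 * \<bar>R\<bar> * \<bar>sin ((a - c) / 2)\<bar>"
proof -
  have "(cos a * R - cos c * R)^2 + (sin a * R - sin c * R)^2
      = R^2 * ((sin a ^ 2 + cos a ^ 2) + (sin c ^ 2 + cos c ^ 2) - 2 * (cos a * cos c + sin a * sin c))"
    by algebra
  also have "\<dots> = R^2 * (2 - 2 * cos (a - c))"
    by (simp add: cos_diff)
  also have "\<dots> = (2 * R * sin ((a - c) / 2))^2"
  proof -
    have "2 * ((a - c) / 2) = a - c"
      by simp
    then have "cos (a - c) = 1 - 2 * sin ((a - c) / 2)^2"
      using cos_double_sin[of "(a - c) / 2"] by argo
    then show ?thesis
      by (simp add: power_mult_distrib)
  qed
  finally show ?thesis
    by (simp add: edist_2 rot_def real_sqrt_abs abs_mult)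
qed

definition cyclic_rotation :: "nat \<Rightarrow> (nat \<Rightarrow> nat) \<Rightarrow> (nat \<Rightarrow> real) \<Rightarrow> (nat \<Rightarrow> real)" where
  "cyclic_rotation p g = rot (2 * pi * real (g 0) / real p)"

lemma isometric_action_cyclic_rotation:
  assumes "0 < p"
  shows "isometric_action p 1 2 (cyclic_rotation p)"
  unfolding isometric_action_def
proof (intro conjI ballI)
  fix g :: "nat \<Rightarrow> nat" and x y
  show "cyclic_rotation p g ` euclid 2 = euclid 2"
    by (simp add: cyclic_rotation_def image_rot_euclid_2)
  show "edist 2 (cyclic_rotation p g x) (cyclic_rotation p g y) = edist 2 x y"
    by (simp add: cyclic_rotation_def edist_rot)
next
  fix x :: "nat \<Rightarrow> real"
  show "cyclic_rotation p (\<lambda>_. 0) x = x"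
    by (simp add: cyclic_rotation_def rot_0)
next
  fix g h :: "nat \<Rightarrow> nat" and x :: "nat \<Rightarrow> real"
  define s where "s = g 0 + h 0"
  have "real s = real (s mod p) + real p * real (s div p)"
    by (metis of_nat_add of_nat_mult mod_mult_div_eq)
  then have "2 * pi * real s / real p = 2 * pi * real (s mod p) / real p + 2 * pi * real (s div p)"
    using assms by (simp add: field_simps)
  then have "rot (2 * pi * real (s mod p) / real p) = rot (2 * pi * real s / real p)"
    by (simp add: rot_add_2pi_multiple)
  also have "2 * pi * real s / real p = 2 * pi * real (g 0) / real p + 2 * pi * real (h 0) / real p"
    by (simp add: s_def add_divide_distrib distrib_left)
  finally show "cyclic_rotation p (tadd p g h) x = cyclic_rotation p g (cyclic_rotation p h x)"
    by (simp add: cyclic_rotation_def tadd_def s_def rot_add)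
qed

definition polygon_vertex :: "nat \<Rightarrow> nat \<Rightarrow> nat \<Rightarrow> real" where
  "polygon_vertex p i = cyclic_rotation p (\<lambda>j. if j = 0 then i else 0)
     (\<lambda>j. if j = 0 then 1 / (2 * sin (pi / real p)) else 0)"

lemma polygon_vertex_in_euclid_2: "polygon_vertex p i \<in> euclid 2"
  unfolding polygon_vertex_def cyclic_rotation_def
  by (rule rot_in_euclid_2) (simp add: euclid_def)

lemma sub_ptoral_polygon_vertices:
  assumes "0 < p" and "A \<subseteq> {..<p}"
  shows "sub_ptoral p 2 (polygon_vertex p ` A)"
  unfolding sub_ptoral_def
proof (intro conjI)
  show "polygon_vertex p ` A \<subseteq> euclid 2"
    using polygon_vertex_in_euclid_2 by blast
  define x0 :: "nat \<Rightarrow> real" where "x0 = (\<lambda>j. if j = 0 then 1 / (2 * sin (pi / real p)) else 0)"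
  have "x0 \<in> euclid 2"
    by (simp add: x0_def euclid_def)
  moreover have "polygon_vertex p ` A \<subseteq> (\<lambda>g. cyclic_rotation p g x0) ` ptorus p 1"
  proof (rule image_subsetI)
    fix i assume "i \<in> A"
    then have "(\<lambda>j. if j = 0 then i else 0) \<in> ptorus p 1"
      using assms(2) by (auto simp: ptorus_def)
    then show "polygon_vertex p i \<in> (\<lambda>g. cyclic_rotation p g x0) ` ptorus p 1"
      unfolding polygon_vertex_def x0_def by (rule imageI)
  qed
  ultimately show "\<exists>n\<ge>2. \<exists>\<alpha>\<ge>1. \<exists>act. isometric_action p \<alpha> n act \<and>
      (\<exists>x0\<in>euclid n. polygon_vertex p ` A \<subseteq> (\<lambda>g. act g x0) ` ptorus p \<alpha>)"
    using isometric_action_cyclic_rotation[OF assms(1)] by blast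
qed

lemma edist_polygon_vertex:
  assumes "2 \<le> p"
  shows "edist 2 (polygon_vertex p i) (polygon_vertex p j)
           = \<bar>sin ((real i - real j) * (pi / real p))\<bar> / sin (pi / real p)"
proof -
  have "0 < sin (pi / real p)"
    using assms by (intro sin_gt_zero) (auto simp: divide_less_eq)
  moreover have "(2 * pi * real i / real p - 2 * pi * real j / real p) / 2
      = (real i - real j) * (pi / real p)"
    using assms by (simp add: field_simps)
  ultimately show ?thesis
    by (simp add: polygon_vertex_def cyclic_rotation_def edist_rot_rot_axis)
qed

lemma sin_ge_cubic: "x - \<bar>x\<bar>^3 / 6 \<le> sin (x :: real)"
proof -
  have sum: "(\<Sum>m<3. sin_coeff m * x ^ m) = x"
    by (simp add: numeral_3_eq_3 sin_coeff_def)
  have "(fact 3 :: real) = 6"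
    by (simp add: numeral_3_eq_3)
  then have coeff: "inverse (fact 3) * \<bar>x\<bar> ^ 3 = \<bar>x\<bar>^3 / 6"
    by simp
  have "\<bar>sin x - x\<bar> \<le> \<bar>x\<bar>^3 / 6"
    using Maclaurin_sin_bound[of x 3] unfolding sum coeff .
  then show ?thesis
    by linarith
qed

lemma sin_mult_div_sin_approx:
  fixes D u :: real
  assumes D: "0 \<le> D" and u: "0 < u" "u \<le> 1" and Du: "D * u \<le> pi"
  shows "\<bar>sin (D * u) / sin u - D\<bar> \<le> (D^3 + D) * u^2"
proof -
  have sin_u: "0 < sin u"
    using u pi_ge_two by (intro sin_gt_zero) auto
  have "D * u \<le> (D + D * u^2) * (u - u^3 / 6)"
  proof -
    have "(D + D * u^2) * (u - u^3 / 6) - D * u = D * u^3 * (5 - u^2) / 6"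
      by (simp add: algebra_simps power2_eq_square power3_eq_cube)
    moreover have "u^2 \<le> 1"
      using u by (simp add: power_le_one)
    then have "0 \<le> D * u^3 * (5 - u^2) / 6"
      using D u by (intro divide_nonneg_nonneg mult_nonneg_nonneg) auto
    ultimately show ?thesis
      by linarith
  qed
  also have "\<dots> \<le> (D + D * u^2) * sin u"
    using sin_ge_cubic[of u] u D by (intro mult_left_mono) auto
  finally have upper: "sin (D * u) \<le> (D + D * u^2) * sin u"
    using sin_x_le_x[of "D * u"] D u by simp
  have lower: "(D - D^3 * u^2) * sin u \<le> sin (D * u)"
  proof (cases "D - D^3 * u^2 \<le> 0")
    case True
    then have "(D - D^3 * u^2) * sin u \<le> 0"
      using sin_u by (simp add: mult_nonpos_nonneg)
    then show ?thesis
      using sin_ge_zero[of "D * u"] D u Du by simp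
  next
    case False
    then have "(D - D^3 * u^2) * sin u \<le> (D - D^3 * u^2) * u"
      using sin_x_le_x[of u] u by (intro mult_left_mono) auto
    also have "\<dots> \<le> D * u - (D * u)^3 / 6"
      using D u by (simp add: algebra_simps power2_eq_square power3_eq_cube)
    also have "\<dots> \<le> sin (D * u)"
      using sin_ge_cubic[of "D * u"] D u by simp
    finally show ?thesis .
  qed
  have "sin (D * u) / sin u \<le> D + D * u^2"
    using upper sin_u by (simp add: divide_le_eq)
  moreover have "D - D^3 * u^2 \<le> sin (D * u) / sin u"
    using lower sin_u by (simp add: le_divide_eq)
  moreover have "0 \<le> D^3 * u^2" "0 \<le> D * u^2"
    using D by simp_all
  ultimately show ?thesis
    unfolding abs_le_iff distrib_right by linarith
qed

lemma edist_polygon_vertex_approx: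
  assumes p: "4 \<le> p" and ij: "\<bar>real i - real j\<bar> \<le> real m" and m: "m \<le> p"
  shows "\<bar>edist 2 (polygon_vertex p i) (polygon_vertex p j) - \<bar>real i - real j\<bar>\<bar>
           \<le> 32 * real m ^ 3 / real p"
proof -
  define D where "D = \<bar>real i - real j\<bar>"
  have D: "0 \<le> D" "D \<le> real m"
    using ij by (simp_all add: D_def)
  define u where "u = pi / real p"
  have u: "0 < u" "u \<le> 1"
    using p pi_less_4 by (auto simp: u_def divide_le_eq)
  have "D * u \<le> real p * u"
    using D m u by (intro mult_right_mono) auto
  then have Du: "D * u \<le> pi"
    using p by (simp add: u_def)
  have "(real i - real j) * u = D * u \<or> (real i - real j) * u = - (D * u)"
    by (auto simp: D_def abs_if algebra_simps)
  then have "\<bar>sin ((real i - real j) * u)\<bar> = \<bar>sin (D * u)\<bar>"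
    by (metis sin_minus abs_minus_cancel)
  also have "\<dots> = sin (D * u)"
    using sin_ge_zero[of "D * u"] D Du u by simp
  finally have "\<bar>edist 2 (polygon_vertex p i) (polygon_vertex p j) - D\<bar> \<le> (D^3 + D) * u^2"
    using edist_polygon_vertex[of p i j] p sin_mult_div_sin_approx[of D u] Du u
    by (simp add: D_def u_def)
  also have "\<dots> \<le> (2 * real m ^ 3) * (16 / real p)"
  proof (rule mult_mono)
    have "real m \<le> real m ^ 3"
      by (cases "m = 0") (simp_all add: self_le_power)
    moreover have "D^3 \<le> real m ^ 3"
      using D by (intro power_mono) auto
    ultimately show "D^3 + D \<le> 2 * real m ^ 3"
      using D by linarith
    have "pi^2 \<le> 4^2"
      using pi_less_4 pi_gt_zero by (intro power_mono) auto
    then have "u^2 \<le> 16 / real p ^ 2"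
      by (simp add: u_def power_divide divide_right_mono)
    also have "\<dots> \<le> 16 / real p"
    proof -
      have "real p \<le> real p ^ 2"
        using p by (simp add: power2_eq_square)
      then show ?thesis
        using p by (intro divide_left_mono) auto
    qed
    finally show "u^2 \<le> 16 / real p" .
  qed (use D in auto)
  finally show ?thesis
    by (simp add: D_def)
qed

lemma polygon_vertices_approximate_path:
  assumes "4 \<le> p" and "m < p" and "32 * real m ^ 3 / real p < \<epsilon>"
  shows "\<exists>b. (\<forall>i\<in>{1..m}. b i \<in> euclid 2) \<and> sub_ptoral p 2 (b ` {1..m}) \<and>
           (\<forall>i\<in>{1..m}. \<forall>j\<in>{1..m}. \<bar>edist 2 (b i) (b j) - \<bar>real i - real j\<bar>\<bar> < \<epsilon>)"
proof (intro exI[of _ "polygon_vertex p"] conjI ballI)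
  show "polygon_vertex p i \<in> euclid 2" if "i \<in> {1..m}" for i
    by (rule polygon_vertex_in_euclid_2)
  show "sub_ptoral p 2 (polygon_vertex p ` {1..m})"
    using assms by (intro sub_ptoral_polygon_vertices) auto
  fix i j assume "i \<in> {1..m}" "j \<in> {1..m}"
  then have "\<bar>edist 2 (polygon_vertex p i) (polygon_vertex p j) - \<bar>real i - real j\<bar>\<bar>
               \<le> 32 * real m ^ 3 / real p"
    using assms by (intro edist_polygon_vertex_approx) auto
  with assms(3)
  show "\<bar>edist 2 (polygon_vertex p i) (polygon_vertex p j) - \<bar>real i - real j\<bar>\<bar> < \<epsilon>"
    by linarith
qed

theorem lemma6:
  shows "\<forall>\<epsilon>::real. \<epsilon> > 0 \<longrightarrow> (\<forall>m::nat. m > 0 \<longrightarrow>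
    (\<exists>p0::nat. \<forall>p::nat. prime p \<and> p \<ge> p0 \<longrightarrow>
      (\<exists>k::nat. \<exists>b :: nat \<Rightarrow> (nat \<Rightarrow> real).
         (\<forall>i\<in>{1..m}. b i \<in> euclid k) \<and>
         sub_ptoral p k (b ` {1..m}) \<and>
         (\<forall>i\<in>{1..m}. \<forall>j\<in>{1..m}.
            \<bar>edist k (b i) (b j) - \<bar>real i - real j\<bar>\<bar> < \<epsilon>))))"
proof (intro allI impI)
  fix \<epsilon> :: real and m :: nat
  assume "\<epsilon> > 0" and "m > 0" \<comment> \<open>the construction also works for \<open>m = 0\<close>\<close>
  define p0 where "p0 = nat \<lceil>32 * real m ^ 3 / \<epsilon>\<rceil> + m + 4"
  have "\<exists>b. (\<forall>i\<in>{1..m}. b i \<in> euclid 2) \<and> sub_ptoral p 2 (b ` {1..m}) \<and>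
          (\<forall>i\<in>{1..m}. \<forall>j\<in>{1..m}. \<bar>edist 2 (b i) (b j) - \<bar>real i - real j\<bar>\<bar> < \<epsilon>)"
    if "p0 \<le> p" for p
  proof (rule polygon_vertices_approximate_path)
    show "4 \<le> p" "m < p"
      using that by (simp_all add: p0_def)
    have "32 * real m ^ 3 / \<epsilon> < real p"
      using that real_nat_ceiling_ge[of "32 * real m ^ 3 / \<epsilon>"] by (simp add: p0_def)
    then show "32 * real m ^ 3 / real p < \<epsilon>"
      using \<open>4 \<le> p\<close> \<open>\<epsilon> > 0\<close> by (simp add: divide_less_eq mult.commute)
  qed
  then show "\<exists>p0. \<forall>p. prime p \<and> p0 \<le> p \<longrightarrow> (\<exists>k b. (\<forall>i\<in>{1..m}. b i \<in> euclid k) \<and>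
      sub_ptoral p k (b ` {1..m}) \<and>
      (\<forall>i\<in>{1..m}. \<forall>j\<in>{1..m}. \<bar>edist k (b i) (b j) - \<bar>real i - real j\<bar>\<bar> < \<epsilon>))"
    by blast
qed

end
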